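(* There is an absolute constant $c>0$ such that for every star celebrity game $\Gamma=\langle V,(w_u)_{u\in V},\alpha,\beta\rangle$ with $\beta>1$ and $W=\sum_{u\in V}w_u$, $PoA(\Gamma)\le c\,W/\alpha$.
   Context: A celebrity game $\Gamma=\langle V,(w_u)_{u\in V},\alpha,\beta\rangle$ consists of a set of players $V=\{1,\dots,n\}$, celebrity weights $w_u>0$, a link cost $\alpha>0$ and a critical distance $\beta$ with $1\le\beta\le n-1$. A strategy of player $u$ is a set $S_u\subseteq V\setminus\{u\}$; a strategy profile is $S=(S_1,\dots,S_n)$; its outcome graph $G[S]$ is the undirected graph on $V$ with edge set $\{\{u,v\}: u\in S_v\text{ or }v\in S_u\}$. With $d_G$ the graph distance (infinite between different connected components), the cost of player $u$ is $c_u(S)=\alpha|S_u|+\sum_{v:\,d_{G[S]}(u,v)>\beta}w_v$ and the social cost is $C(S)=\sum_{u\in V}c_u(S)$. $S$ is a Nash equilibrium (NE) if no player can strictly decrease its cost by changing only its own strategy. $\mathrm{opt}(\Gamma)=\min_S C(S)$ and $PoA(\Gamma)=\max_{S\text{ NE}}C(S)/\mathrm{opt}(\Gamma)$. $\Gamma$ is a star celebrity game if $G[S]$ is connected for some NE $S$. *)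

theory Defs
  imports Complex_Main
begin

definition players :: "nat \<Rightarrow> nat set" where
  "players n = {1..n}"

definition profiles :: "nat \<Rightarrow> (nat \<Rightarrow> nat set) set" where
  "profiles n = {S. \<forall>u. S u \<subseteq> (if u \<in> players n then players n - {u} else {})}"

definition adj :: "(nat \<Rightarrow> nat set) \<Rightarrow> nat \<Rightarrow> nat \<Rightarrow> bool" where
  "adj S u v \<longleftrightarrow> u \<in> S v \<or> v \<in> S u"

fun dist_le :: "(nat \<Rightarrow> nat set) \<Rightarrow> nat \<Rightarrow> nat \<Rightarrow> nat \<Rightarrow> bool" where
  "dist_le S 0 u v \<longleftrightarrow> u = v"
| "dist_le S (Suc k) u v \<longleftrightarrow> dist_le S k u v \<or> (\<exists>x. dist_le S k u x \<and> adj S x v)"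

definition player_cost ::
  "nat \<Rightarrow> (nat \<Rightarrow> real) \<Rightarrow> real \<Rightarrow> nat \<Rightarrow> (nat \<Rightarrow> nat set) \<Rightarrow> nat \<Rightarrow> real" where
  "player_cost n w \<alpha> \<beta> S u =
     \<alpha> * real (card (S u)) + (\<Sum>v \<in> {v \<in> players n. \<not> dist_le S \<beta> u v}. w v)"

definition social_cost ::
  "nat \<Rightarrow> (nat \<Rightarrow> real) \<Rightarrow> real \<Rightarrow> nat \<Rightarrow> (nat \<Rightarrow> nat set) \<Rightarrow> real" where
  "social_cost n w \<alpha> \<beta> S = (\<Sum>u \<in> players n. player_cost n w \<alpha> \<beta> S u)"

definition is_NE :: "nat \<Rightarrow> (nat \<Rightarrow> real) \<Rightarrow> real \<Rightarrow> nat \<Rightarrow> (nat \<Rightarrow> nat set) \<Rightarrow> bool" where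
  "is_NE n w \<alpha> \<beta> S \<longleftrightarrow> S \<in> profiles n \<and>
     (\<forall>u \<in> players n. \<forall>T. T \<subseteq> players n - {u} \<longrightarrow>
        player_cost n w \<alpha> \<beta> S u \<le> player_cost n w \<alpha> \<beta> (S(u := T)) u)"

definition opt :: "nat \<Rightarrow> (nat \<Rightarrow> real) \<Rightarrow> real \<Rightarrow> nat \<Rightarrow> real" where
  "opt n w \<alpha> \<beta> = Min (social_cost n w \<alpha> \<beta> ` profiles n)"

definition PoA :: "nat \<Rightarrow> (nat \<Rightarrow> real) \<Rightarrow> real \<Rightarrow> nat \<Rightarrow> real" where
  "PoA n w \<alpha> \<beta> = Max ((\<lambda>S. social_cost n w \<alpha> \<beta> S / opt n w \<alpha> \<beta>) ` {S. is_NE n w \<alpha> \<beta> S})"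

definition outcome_connected :: "nat \<Rightarrow> (nat \<Rightarrow> nat set) \<Rightarrow> bool" where
  "outcome_connected n S \<longleftrightarrow> (\<forall>u \<in> players n. \<forall>v \<in> players n. \<exists>k. dist_le S k u v)"

definition star_game :: "nat \<Rightarrow> (nat \<Rightarrow> real) \<Rightarrow> real \<Rightarrow> nat \<Rightarrow> bool" where
  "star_game n w \<alpha> \<beta> \<longleftrightarrow> (\<exists>S. is_NE n w \<alpha> \<beta> S \<and> outcome_connected n S)"

definition celebrity_game :: "nat \<Rightarrow> (nat \<Rightarrow> real) \<Rightarrow> real \<Rightarrow> nat \<Rightarrow> bool" where
  "celebrity_game n w \<alpha> \<beta> \<longleftrightarrow>
     (\<forall>u \<in> players n. w u > 0) \<and> \<alpha> > 0 \<and> 1 \<le> \<beta> \<and> \<beta> \<le> n - 1"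

end

theory Submission
  imports Defs "HOL-Library.FuncSet"
begin

text \<open>In a Nash equilibrium every player could drop all its links and pay at most
  the total weight W, so the social cost of an equilibrium is at most n W. Conversely,
  in any profile the links cost at least \<alpha>/2 per non-isolated player, and an isolated
  player u pays W - w u while every non-isolated player pays for all isolated ones;
  since a connected equilibrium forces \<alpha> \<le> W, the optimum is at least \<alpha> n / 2.
  Hence the price of anarchy is at most 2 W / \<alpha>.\<close>

definition isolated :: "(nat \<Rightarrow> nat set) \<Rightarrow> nat \<Rightarrow> bool" where
  "isolated S u \<longleftrightarrow> (\<forall>x. \<not> adj S u x)"

definition far :: "nat \<Rightarrow> nat \<Rightarrow> (nat \<Rightarrow> nat set) \<Rightarrow> nat \<Rightarrow> nat set" where
  "far n \<beta> S u = {v \<in> players n. \<not> dist_le S \<beta> u v}"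

lemma finite_players [simp]: "finite (players n)"
  by (simp add: players_def)

lemma card_players [simp]: "card (players n) = n"
  by (simp add: players_def)

lemma far_subset_players: "far n \<beta> S u \<subseteq> players n"
  by (auto simp: far_def)

lemma dist_le_refl: "dist_le S k u u"
  by (induction k) auto

lemma dist_le_from_isolated: "dist_le S k u v \<Longrightarrow> isolated S u \<Longrightarrow> v = u"
  by (induction k arbitrary: v) (auto simp: isolated_def adj_def)

lemma dist_le_to_isolated: "dist_le S k v u \<Longrightarrow> isolated S u \<Longrightarrow> v = u"
  by (induction k) (auto simp: isolated_def adj_def)

lemma far_isolated: "isolated S u \<Longrightarrow> far n \<beta> S u = players n - {u}"
  using dist_le_from_isolated dist_le_refl by (fastforce simp: far_def)

lemma isolated_in_far: "isolated S u \<Longrightarrow> u \<in> players n \<Longrightarrow> v \<noteq> u \<Longrightarrow> u \<in> far n \<beta> S v"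
  using dist_le_to_isolated by (auto simp: far_def)

lemma social_cost_eq:
  "social_cost n w \<alpha> \<beta> S =
     \<alpha> * (\<Sum>u \<in> players n. real (card (S u))) + (\<Sum>u \<in> players n. \<Sum>v \<in> far n \<beta> S u. w v)"
  by (simp add: social_cost_def player_cost_def far_def sum.distrib sum_distrib_left)

lemma profile_subset_players: "S \<in> profiles n \<Longrightarrow> S u \<subseteq> players n"
  unfolding profiles_def by (auto split: if_splits)

lemma profile_outside_players: "S \<in> profiles n \<Longrightarrow> u \<notin> players n \<Longrightarrow> S u = {}"
  unfolding profiles_def by (metis (mono_tags, lifting) mem_Collect_eq subset_empty)

lemma finite_profiles: "finite (profiles n)"
proof -
  let ?extend = "\<lambda>f u. if u \<in> players n then f u else {}"
  have "profiles n \<subseteq> ?extend ` (players n \<rightarrow>\<^sub>E Pow (players n))"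
  proof
    fix S assume S: "S \<in> profiles n"
    have "S = ?extend (restrict S (players n))"
      by (intro ext) (simp add: profile_outside_players[OF S])
    moreover have "restrict S (players n) \<in> players n \<rightarrow>\<^sub>E Pow (players n)"
      using profile_subset_players[OF S] by simp
    ultimately show "S \<in> ?extend ` (players n \<rightarrow>\<^sub>E Pow (players n))" by blast
  qed
  then show ?thesis
    by (rule finite_subset) (intro finite_imageI finite_PiE; simp)
qed

text \<open>Each bought link makes at most two players non-isolated.\<close>
lemma card_non_isolated_le:
  assumes S: "S \<in> profiles n"
  shows "card {u \<in> players n. \<not> isolated S u} \<le> 2 * (\<Sum>u \<in> players n. card (S u))"
proof -
  define L where "L = Sigma (players n) S"
  have "finite L"
    unfolding L_def using profile_subset_players[OF S] by (meson finite_SigmaI finite_players finite_subset)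
  have card_L: "card L = (\<Sum>u \<in> players n. card (S u))"
    unfolding L_def using finite_subset[OF profile_subset_players[OF S] finite_players]
    by (intro card_SigmaI) auto
  have "{u \<in> players n. \<not> isolated S u} \<subseteq> fst ` L \<union> snd ` L"
  proof
    fix u assume "u \<in> {u \<in> players n. \<not> isolated S u}"
    then obtain x where u: "u \<in> players n" and "u \<in> S x \<or> x \<in> S u"
      by (auto simp: isolated_def adj_def)
    then have "(x, u) \<in> L \<or> (u, x) \<in> L"
      using profile_outside_players[OF S, of x] by (auto simp: L_def)
    then show "u \<in> fst ` L \<union> snd ` L" by force
  qed
  then have "card {u \<in> players n. \<not> isolated S u} \<le> card (fst ` L \<union> snd ` L)"
    using \<open>finite L\<close> by (intro card_mono) auto
  also have "\<dots> \<le> card (fst ` L) + card (snd ` L)" by (rule card_Un_le)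
  also have "\<dots> \<le> 2 * card L" using \<open>finite L\<close> card_image_le[of L fst] card_image_le[of L snd] by linarith
  finally show ?thesis by (simp add: card_L)
qed

lemma far_weight_ge_isolated:
  assumes w: "\<forall>u \<in> players n. 0 \<le> w u" and n: "n \<ge> 2"
  defines "W \<equiv> \<Sum>u \<in> players n. w u"
  shows "real (card {u \<in> players n. isolated S u}) * W / 2
           \<le> (\<Sum>u \<in> players n. \<Sum>v \<in> far n \<beta> S u. w v)"
proof -
  define I where "I = {u \<in> players n. isolated S u}"
  define J where "J = {u \<in> players n. \<not> isolated S u}"
  define WI where "WI = (\<Sum>v \<in> I. w v)"
  have split: "players n = I \<union> J" "I \<inter> J = {}" "finite I" "finite J"
    by (auto simp: I_def J_def)
  have "0 \<le> WI" "0 \<le> W"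
    using w by (auto simp: WI_def W_def I_def intro: sum_nonneg)
  have far_I: "(\<Sum>v \<in> far n \<beta> S u. w v) = W - w u" if "u \<in> I" for u
    using that far_isolated[of S u] by (simp add: I_def W_def sum_diff1)
  have far_J: "WI \<le> (\<Sum>v \<in> far n \<beta> S u. w v)" if "u \<in> J" for u
  proof -
    have "I \<subseteq> far n \<beta> S u"
      using that by (auto simp: I_def J_def intro: isolated_in_far)
    then show ?thesis
      unfolding WI_def using w far_subset_players[of n \<beta> S u]
      by (intro sum_mono2) (auto intro: finite_subset)
  qed
  have "(\<Sum>u \<in> players n. \<Sum>v \<in> far n \<beta> S u. w v)
          = (\<Sum>u \<in> I. \<Sum>v \<in> far n \<beta> S u. w v) + (\<Sum>u \<in> J. \<Sum>v \<in> far n \<beta> S u. w v)"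
    using split by (simp add: sum.union_disjoint)
  also have "\<dots> \<ge> real (card I) * W - WI + real (card J) * WI"
    using far_I far_J sum_mono[of J "\<lambda>_. WI"]
    by (simp add: sum_subtractf WI_def)
  finally have far_ge: "real (card I) * W - WI + real (card J) * WI
                          \<le> (\<Sum>u \<in> players n. \<Sum>v \<in> far n \<beta> S u. w v)" .
  show ?thesis
  proof (cases "J = {}")
    case True
    then have "I = players n" using split by auto
    then have "card I = n" "WI = W" by (auto simp: WI_def W_def)
    then have "real n * W - W \<le> (\<Sum>u \<in> players n. \<Sum>v \<in> far n \<beta> S u. w v)"
      using far_ge True by simp
    moreover have "real n * W / 2 \<le> real n * W - W"
      using mult_right_mono[of 2 "real n" W] n \<open>0 \<le> W\<close> by (simp add: mult.commute)
    ultimately show ?thesis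
      unfolding I_def[symmetric] \<open>card I = n\<close> by linarith
  next
    case False
    then have "1 \<le> card J" using split by (simp add: Suc_le_eq card_gt_0_iff)
    then have "WI \<le> real (card J) * WI"
      using mult_right_mono[of 1 "real (card J)" WI] \<open>0 \<le> WI\<close> by simp
    moreover have "0 \<le> real (card I) * W" using \<open>0 \<le> W\<close> by simp
    ultimately show ?thesis using far_ge by (simp add: I_def)
  qed
qed

lemma social_cost_ge:
  assumes S: "S \<in> profiles n" and w: "\<forall>u \<in> players n. 0 \<le> w u" and n: "n \<ge> 2"
    and \<alpha>: "0 \<le> \<alpha>" "\<alpha> \<le> (\<Sum>u \<in> players n. w u)"
  shows "\<alpha> * real n / 2 \<le> social_cost n w \<alpha> \<beta> S"
proof -
  define I where "I = {u \<in> players n. isolated S u}"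
  define J where "J = {u \<in> players n. \<not> isolated S u}"
  have "I \<union> J = players n" "I \<inter> J = {}" by (auto simp: I_def J_def)
  then have "card I + card J = n"
    by (metis card_Un_disjoint card_players finite_Un finite_players)
  have "real (card J) \<le> 2 * (\<Sum>u \<in> players n. real (card (S u)))"
    using card_non_isolated_le[OF S] unfolding J_def[symmetric]
    by (metis of_nat_le_iff of_nat_mult of_nat_numeral of_nat_sum)
  then have "\<alpha> * real (card J) / 2 \<le> \<alpha> * (\<Sum>u \<in> players n. real (card (S u)))"
    using \<alpha>(1) mult_left_mono by fastforce
  moreover have "\<alpha> * real (card I) / 2 \<le> real (card I) * (\<Sum>u \<in> players n. w u) / 2"
    using mult_right_mono[OF \<alpha>(2), of "real (card I)"] by (simp add: mult.commute)
  moreover note far_weight_ge_isolated[OF w n, of S \<beta>, folded I_def]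
  moreover have "\<alpha> * real n = \<alpha> * real (card I) + \<alpha> * real (card J)"
    using \<open>card I + card J = n\<close> by (simp flip: distrib_left)
  ultimately show ?thesis
    unfolding social_cost_eq by linarith
qed

text \<open>Deviating to the empty strategy costs at most the total weight.\<close>
lemma NE_player_cost_le:
  assumes "is_NE n w \<alpha> \<beta> S" "\<forall>u \<in> players n. 0 \<le> w u" "u \<in> players n"
  shows "player_cost n w \<alpha> \<beta> S u \<le> (\<Sum>v \<in> players n. w v)"
proof -
  have "player_cost n w \<alpha> \<beta> S u \<le> player_cost n w \<alpha> \<beta> (S(u := {})) u"
    using assms(1,3) unfolding is_NE_def by blast
  also have "\<dots> \<le> (\<Sum>v \<in> players n. w v)"
    unfolding player_cost_def using assms(2) by (simp, intro sum_mono2) auto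
  finally show ?thesis .
qed

lemma NE_social_cost_le:
  assumes "is_NE n w \<alpha> \<beta> S" "\<forall>u \<in> players n. 0 \<le> w u"
  shows "social_cost n w \<alpha> \<beta> S \<le> real n * (\<Sum>u \<in> players n. w u)"
  using sum_mono[of "players n" "player_cost n w \<alpha> \<beta> S" "\<lambda>_. \<Sum>v \<in> players n. w v"]
    NE_player_cost_le[OF assms] by (simp add: social_cost_def)

text \<open>In a connected outcome with at least two players somebody buys a link,
  and that player pays at least \<alpha>.\<close>
lemma connected_NE_alpha_le_total_weight:
  assumes NE: "is_NE n w \<alpha> \<beta> S" and "outcome_connected n S" and "n \<ge> 2"
    and w: "\<forall>u \<in> players n. 0 \<le> w u" and "0 \<le> \<alpha>"
  shows "\<alpha> \<le> (\<Sum>u \<in> players n. w u)"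
proof -
  have S: "S \<in> profiles n" using NE by (simp add: is_NE_def)
  have "1 \<in> players n" "2 \<in> players n" using \<open>n \<ge> 2\<close> by (auto simp: players_def)
  then obtain k where "dist_le S k 1 2"
    using \<open>outcome_connected n S\<close> unfolding outcome_connected_def by blast
  then have "\<not> isolated S 1" using dist_le_from_isolated by fastforce
  then obtain b x where "x \<in> S b" by (auto simp: isolated_def adj_def)
  then have b: "b \<in> players n" and "S b \<noteq> {}"
    using profile_outside_players[OF S] by auto
  then have "1 \<le> card (S b)"
    using finite_subset[OF profile_subset_players[OF S]] by (simp add: Suc_le_eq card_gt_0_iff)
  then have "\<alpha> \<le> \<alpha> * real (card (S b))"
    using \<open>0 \<le> \<alpha>\<close> by (simp add: mult_le_cancel_left1)
  also have "\<dots> \<le> player_cost n w \<alpha> \<beta> S b"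
    unfolding player_cost_def using w by (auto intro!: sum_nonneg)
  also have "\<dots> \<le> (\<Sum>u \<in> players n. w u)" by (rule NE_player_cost_le[OF NE w b])
  finally show ?thesis .
qed

lemma star_game_opt_ge:
  assumes "celebrity_game n w \<alpha> \<beta>" and "star_game n w \<alpha> \<beta>"
  shows "\<alpha> * real n / 2 \<le> opt n w \<alpha> \<beta>"
proof -
  have w: "\<forall>u \<in> players n. 0 \<le> w u" and "\<alpha> > 0" and "n \<ge> 2"
    using assms(1) unfolding celebrity_game_def by (auto intro: less_imp_le)
  obtain S0 where S0: "is_NE n w \<alpha> \<beta> S0" "outcome_connected n S0"
    using assms(2) unfolding star_game_def by auto
  have "\<alpha> \<le> (\<Sum>u \<in> players n. w u)"
    using connected_NE_alpha_le_total_weight[OF S0 \<open>n \<ge> 2\<close> w] \<open>\<alpha> > 0\<close> by simp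
  then show ?thesis
    unfolding opt_def using finite_profiles S0(1) social_cost_ge[OF _ w \<open>n \<ge> 2\<close>] \<open>\<alpha> > 0\<close>
    by (subst Min_ge_iff) (auto simp: is_NE_def)
qed

theorem lemma1:
  "\<exists>c::real. c > 0 \<and>
     (\<forall>(n::nat) (w::nat \<Rightarrow> real) (\<alpha>::real) (\<beta>::nat).
        celebrity_game n w \<alpha> \<beta> \<and> star_game n w \<alpha> \<beta> \<and> \<beta> > 1 \<longrightarrow>
        PoA n w \<alpha> \<beta> \<le> c * (\<Sum>u \<in> players n. w u) / \<alpha>)"
proof (intro exI[of _ 2] conjI allI impI)
  fix n w \<alpha> \<beta>
  assume game: "celebrity_game n w \<alpha> \<beta> \<and> star_game n w \<alpha> \<beta> \<and> (\<beta>::nat) > 1"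
  define W where "W = (\<Sum>u \<in> players n. w u)"
  have w: "\<forall>u \<in> players n. 0 \<le> w u" and "\<alpha> > 0" and "n \<ge> 2"
    using game unfolding celebrity_game_def by (auto intro: less_imp_le)
  have opt_ge: "\<alpha> * real n / 2 \<le> opt n w \<alpha> \<beta>"
    using game star_game_opt_ge by blast
  have "0 \<le> W" unfolding W_def using w by (simp add: sum_nonneg)
  have ratio_le: "social_cost n w \<alpha> \<beta> S / opt n w \<alpha> \<beta> \<le> 2 * W / \<alpha>" if "is_NE n w \<alpha> \<beta> S" for S
  proof -
    have "social_cost n w \<alpha> \<beta> S / opt n w \<alpha> \<beta> \<le> real n * W / (\<alpha> * real n / 2)"
      using NE_social_cost_le[OF that w] opt_ge \<open>0 \<le> W\<close> \<open>\<alpha> > 0\<close> \<open>n \<ge> 2\<close>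
      by (intro frac_le) (auto simp: W_def)
    also have "\<dots> = 2 * W / \<alpha>" using \<open>\<alpha> > 0\<close> \<open>n \<ge> 2\<close> by (simp add: field_simps)
    finally show ?thesis .
  qed
  have "finite {S. is_NE n w \<alpha> \<beta> S}"
    using finite_profiles by (rule finite_subset[rotated]) (auto simp: is_NE_def)
  moreover have "{S. is_NE n w \<alpha> \<beta> S} \<noteq> {}"
    using game unfolding star_game_def by auto
  ultimately show "PoA n w \<alpha> \<beta> \<le> 2 * (\<Sum>u \<in> players n. w u) / \<alpha>"
    unfolding PoA_def W_def[symmetric] using ratio_le by (subst Max_le_iff) auto
qed simp

end
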